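(* Let $G$ and $H$ be finite simple graphs, and let $u\in V(G)$, $v\in V(H)$. Then \[\mathrm{dp}_{G\times H}((u,v))=x^{\deg_G u}\,\mathrm{dp}_H(v)+x^{\deg_H v}\,\mathrm{dp}_G(u).\]
   Context: For a vertex $w$ of a simple graph $\Gamma$, the degree polynomial $\mathrm{dp}_\Gamma(w)\in\mathbb{Z}[x]$ is the polynomial in which the coefficient of $x^{i}$ is the number of neighbors of $w$ in $\Gamma$ having degree $i$ in $\Gamma$ ($\mathrm{dp}_\Gamma(w)=0$ if $w$ is isolated). The Cartesian product $G\times H$ is the simple graph on $V(G)\times V(H)$ in which $(u_1,v_1)\sim(u_2,v_2)$ if and only if either $u_1=u_2$ and $v_1\sim v_2$ in $H$, or $v_1=v_2$ and $u_1\sim u_2$ in $G$. *)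

theory Defs
  imports "HOL-Computational_Algebra.Polynomial"
begin

definition finite_simple_graph :: "'a set \<Rightarrow> ('a \<Rightarrow> 'a \<Rightarrow> bool) \<Rightarrow> bool" where
  "finite_simple_graph V E \<longleftrightarrow> finite V \<and>
     (\<forall>x y. E x y \<longrightarrow> x \<in> V \<and> y \<in> V) \<and>
     (\<forall>x y. E x y \<longrightarrow> E y x) \<and> (\<forall>x. \<not> E x x)"

definition neighbors :: "'a set \<Rightarrow> ('a \<Rightarrow> 'a \<Rightarrow> bool) \<Rightarrow> 'a \<Rightarrow> 'a set" where
  "neighbors V E w = {y \<in> V. E w y}"

definition vdeg :: "'a set \<Rightarrow> ('a \<Rightarrow> 'a \<Rightarrow> bool) \<Rightarrow> 'a \<Rightarrow> nat" where
  "vdeg V E w = card (neighbors V E w)"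

definition deg_poly :: "'a set \<Rightarrow> ('a \<Rightarrow> 'a \<Rightarrow> bool) \<Rightarrow> 'a \<Rightarrow> int poly" where
  "deg_poly V E w = (\<Sum>y\<in>neighbors V E w. monom 1 (vdeg V E y))"

definition cart_edges :: "('a \<Rightarrow> 'a \<Rightarrow> bool) \<Rightarrow> ('b \<Rightarrow> 'b \<Rightarrow> bool)
    \<Rightarrow> ('a \<times> 'b) \<Rightarrow> ('a \<times> 'b) \<Rightarrow> bool" where
  "cart_edges EG EH p q \<longleftrightarrow>
     (fst p = fst q \<and> EH (snd p) (snd q)) \<or> (snd p = snd q \<and> EG (fst p) (fst q))"

end

theory Submission
  imports Defs
begin

text \<open>The neighbours of \<open>(u, v)\<close> in \<open>G \<times> H\<close> are the disjoint union of the copy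
  \<open>{u} \<times> N\<^sub>H(v)\<close> and the copy \<open>N\<^sub>G(u) \<times> {v}\<close>, and the degree of a product vertex
  is the sum of the degrees of its coordinates. Splitting the sum defining the
  degree polynomial accordingly, a neighbour \<open>(u, y)\<close> contributes
  \<open>x\<^bsup>deg u + deg y\<^esup> = x\<^bsup>deg u\<^esup> x\<^bsup>deg y\<^esup>\<close>, and symmetrically for \<open>(x, v)\<close>.\<close>

lemma finite_neighbors: "finite_simple_graph V E \<Longrightarrow> finite (neighbors V E w)"
  unfolding neighbors_def finite_simple_graph_def by auto

lemma neighbors_cart_edges:
  assumes "u \<in> VG" and "v \<in> VH"
  shows "neighbors (VG \<times> VH) (cart_edges EG EH) (u, v)
     = Pair u ` neighbors VH EH v \<union> (\<lambda>x. (x, v)) ` neighbors VG EG u"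
  using assms unfolding neighbors_def cart_edges_def by auto

lemma sum_neighbors_cart_edges:
  assumes G: "finite_simple_graph VG EG" and H: "finite_simple_graph VH EH"
    and u: "u \<in> VG" and v: "v \<in> VH"
  shows "(\<Sum>q\<in>neighbors (VG \<times> VH) (cart_edges EG EH) (u, v). f q)
     = (\<Sum>y\<in>neighbors VH EH v. f (u, y)) + (\<Sum>x\<in>neighbors VG EG u. f (x, v))"
proof -
  have disjoint: "Pair u ` neighbors VH EH v \<inter> (\<lambda>x. (x, v)) ` neighbors VG EG u = {}"
    using H unfolding neighbors_def finite_simple_graph_def by auto
  have "(\<Sum>q\<in>neighbors (VG \<times> VH) (cart_edges EG EH) (u, v). f q)
     = (\<Sum>q\<in>Pair u ` neighbors VH EH v. f q) + (\<Sum>q\<in>(\<lambda>x. (x, v)) ` neighbors VG EG u. f q)"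
    unfolding neighbors_cart_edges[OF u v]
    using finite_neighbors[OF G] finite_neighbors[OF H] disjoint
    by (intro sum.union_disjoint) auto
  also have "\<dots> = (\<Sum>y\<in>neighbors VH EH v. f (u, y)) + (\<Sum>x\<in>neighbors VG EG u. f (x, v))"
    by (simp add: sum.reindex inj_on_def)
  finally show ?thesis .
qed

lemma vdeg_cart_edges:
  assumes "finite_simple_graph VG EG" and "finite_simple_graph VH EH"
    and "u \<in> VG" and "v \<in> VH"
  shows "vdeg (VG \<times> VH) (cart_edges EG EH) (u, v) = vdeg VG EG u + vdeg VH EH v"
  using sum_neighbors_cart_edges[OF assms, of "\<lambda>_. 1 :: nat"]
  unfolding vdeg_def by simp

theorem theorem4p16:
  fixes VG :: "'a set" and EG :: "'a \<Rightarrow> 'a \<Rightarrow> bool"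
    and VH :: "'b set" and EH :: "'b \<Rightarrow> 'b \<Rightarrow> bool"
  assumes "finite_simple_graph VG EG" and "finite_simple_graph VH EH"
    and "u \<in> VG" and "v \<in> VH"
  shows "deg_poly (VG \<times> VH) (cart_edges EG EH) (u, v)
         = monom 1 (vdeg VG EG u) * deg_poly VH EH v
           + monom 1 (vdeg VH EH v) * deg_poly VG EG u"
proof -
  note G = assms(1) and H = assms(2)
  let ?dp = "\<lambda>q. monom (1 :: int) (vdeg (VG \<times> VH) (cart_edges EG EH) q)"
  have in_VG: "x \<in> VG" if "x \<in> neighbors VG EG u" for x
    using that unfolding neighbors_def by simp
  have in_VH: "y \<in> VH" if "y \<in> neighbors VH EH v" for y
    using that unfolding neighbors_def by simp
  have "deg_poly (VG \<times> VH) (cart_edges EG EH) (u, v)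
      = (\<Sum>y\<in>neighbors VH EH v. ?dp (u, y)) + (\<Sum>x\<in>neighbors VG EG u. ?dp (x, v))"
    unfolding deg_poly_def by (rule sum_neighbors_cart_edges[OF assms])
  also have "(\<Sum>y\<in>neighbors VH EH v. ?dp (u, y))
      = (\<Sum>y\<in>neighbors VH EH v. monom 1 (vdeg VG EG u) * monom 1 (vdeg VH EH y))"
    by (intro sum.cong) (simp_all add: vdeg_cart_edges[OF G H assms(3) in_VH] mult_monom)
  also have "(\<Sum>x\<in>neighbors VG EG u. ?dp (x, v))
      = (\<Sum>x\<in>neighbors VG EG u. monom 1 (vdeg VH EH v) * monom 1 (vdeg VG EG x))"
    by (intro sum.cong) (simp_all add: vdeg_cart_edges[OF G H in_VG assms(4)] mult_monom add.commute)
  finally show ?thesis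
    unfolding deg_poly_def by (simp add: sum_distrib_left)
qed

end
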